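(* Let $\underline x<\overline x$ and $\underline y<\overline y$ be real numbers and $\alpha\in\mathbb{R}$. Then the convex hull of $$T_\alpha=\{(x,y)\in\mathbb{R}^2:\ xy=\alpha,\ x\in[\underline x,\overline x],\ y\in[\underline y,\overline y]\}$$ is second-order cone representable.
   Context: A set $S\subseteq\mathbb{R}^n$ is second-order cone representable if it is the projection onto the first $n$ coordinates of a set $\{(x,u)\in\mathbb{R}^n\times\mathbb{R}^m\}$ defined by finitely many linear equalities/inequalities and constraints of the form $\|A_k(x,u)+b_k\|_2\le c_k^T(x,u)+d_k$. *)

theory Defs
  imports "HOL-Analysis.Analysis"
begin

text \<open>An affine form in the variables (x,u), where x ranges over the ambient
euclidean space and u = (u_0,...,u_{m-1}) are m auxiliary real variables.\<close>

type_synonym 'a aff_form = "'a \<times> (nat \<Rightarrow> real) \<times> real"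

definition aff_eval :: "nat \<Rightarrow> ('a::real_inner) aff_form \<Rightarrow> 'a \<Rightarrow> (nat \<Rightarrow> real) \<Rightarrow> real" where
  "aff_eval m a x u = (case a of (c, d, e) \<Rightarrow> inner c x + (\<Sum>j<m. d j * u j) + e)"

text \<open>Second-order cone representability: S is the projection onto x of the set of
(x,u), u in R^m, satisfying finitely many linear equalities, linear inequalities
and second-order cone constraints  ||A_k(x,u) + b_k||_2 <= c_k^T (x,u) + d_k
(each row of A_k(x,u)+b_k being an affine form, listed in the first component).\<close>

definition soc_representable :: "('a::euclidean_space) set \<Rightarrow> bool" where
  "soc_representable S \<longleftrightarrow>
     (\<exists>(m::nat) (Eqs::'a aff_form list) (Ineqs::'a aff_form list)
        (Cones::('a aff_form list \<times> 'a aff_form) list).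
        S = {x. \<exists>u::nat \<Rightarrow> real.
               (\<forall>a\<in>set Eqs. aff_eval m a x u = 0) \<and>
               (\<forall>a\<in>set Ineqs. aff_eval m a x u \<le> 0) \<and>
               (\<forall>(A, c)\<in>set Cones.
                   sqrt (\<Sum>a\<leftarrow>A. (aff_eval m a x u)\<^sup>2) \<le> aff_eval m c x u)})"

end

theory Submission
  imports Defs
begin

text \<open>The set T is the union of two pieces: for \<alpha> \<noteq> 0 the two branches of the hyperbola
  inside the box, each an arc {(sx t, sy \<beta>/t) | t \<in> [a, b]}, and for \<alpha> = 0 the parts of the two
  axes inside the box. For each piece S we give a convex set K in R^2 \<times> R, cut out by linear and
  second-order cone constraints, whose slice at height L > 0 lies in L \<cdot> conv S, whose slice at
  height 0 is {0}, and which contains S \<times> {1}. For an arc, conv S is bounded by the chord through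
  its endpoints and by xy \<ge> \<beta>, a rotated second-order cone. Balas' formula
  conv (S1 \<union> S2) = {v1 + v2 | (v1, L) \<in> K1, (v2, 1 - L) \<in> K2}
  then exhibits the convex hull as a projection with L and v1 as auxiliary variables.\<close>

definition soc_set ::
    "nat \<Rightarrow> ('a::euclidean_space) aff_form list \<Rightarrow> 'a aff_form list \<Rightarrow>
     ('a aff_form list \<times> 'a aff_form) list \<Rightarrow> 'a set" where
  "soc_set m Eqs Ineqs Cones = {x. \<exists>u::nat \<Rightarrow> real.
     (\<forall>a\<in>set Eqs. aff_eval m a x u = 0) \<and>
     (\<forall>a\<in>set Ineqs. aff_eval m a x u \<le> 0) \<and>
     (\<forall>(A, c)\<in>set Cones. sqrt (\<Sum>a\<leftarrow>A. (aff_eval m a x u)\<^sup>2) \<le> aff_eval m c x u)}"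

lemma soc_representable_iff_soc_set:
  "soc_representable S \<longleftrightarrow> (\<exists>m Eqs Ineqs Cones. S = soc_set m Eqs Ineqs Cones)"
  by (simp add: soc_representable_def soc_set_def)

lemma aff_eval_convex_comb:
  assumes "s + t = 1"
  shows "aff_eval m a (s *\<^sub>R x + t *\<^sub>R y) (\<lambda>j. s * u j + t * v j) =
         s * aff_eval m a x u + t * aff_eval m a y v"
proof -
  obtain c d e where a: "a = (c, d, e)" by (cases a) auto
  have "e = s * e + t * e" using assms by (metis distrib_right mult_1)
  then show ?thesis unfolding a aff_eval_def
    by (simp add: inner_add_right algebra_simps sum.distrib sum_distrib_left)
qed

lemma sqrt_sum_list_power2_convex:
  fixes f g :: "'b \<Rightarrow> real"
  assumes "0 \<le> s" "0 \<le> t"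
  shows "sqrt (\<Sum>a\<leftarrow>A. (s * f a + t * g a)\<^sup>2) \<le>
         s * sqrt (\<Sum>a\<leftarrow>A. (f a)\<^sup>2) + t * sqrt (\<Sum>a\<leftarrow>A. (g a)\<^sup>2)"
proof -
  have L2: "sqrt (\<Sum>a\<leftarrow>A. (h a)\<^sup>2) = L2_set (\<lambda>i. h (A ! i)) {..<length A}" for h :: "'b \<Rightarrow> real"
    unfolding L2_set_def by (simp add: sum_list_sum_nth atLeast0LessThan)
  have "L2_set (\<lambda>i. s * f (A ! i) + t * g (A ! i)) {..<length A} \<le>
        L2_set (\<lambda>i. s * f (A ! i)) {..<length A} + L2_set (\<lambda>i. t * g (A ! i)) {..<length A}"
    by (rule L2_set_triangle_ineq)
  also have "\<dots> = s * L2_set (\<lambda>i. f (A ! i)) {..<length A} + t * L2_set (\<lambda>i. g (A ! i)) {..<length A}"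
    using assms by (simp add: L2_set_right_distrib)
  finally show ?thesis by (simp only: L2)
qed

lemma convex_soc_set: "convex (soc_set m Eqs Ineqs Cones)"
proof (rule convexI)
  fix x y :: 'a and s t :: real
  assume "x \<in> soc_set m Eqs Ineqs Cones" "y \<in> soc_set m Eqs Ineqs Cones"
    and st: "0 \<le> s" "0 \<le> t" "s + t = 1"
  then obtain u v where
      u: "\<forall>a\<in>set Eqs. aff_eval m a x u = 0" "\<forall>a\<in>set Ineqs. aff_eval m a x u \<le> 0"
         "\<forall>(A, c)\<in>set Cones. sqrt (\<Sum>a\<leftarrow>A. (aff_eval m a x u)\<^sup>2) \<le> aff_eval m c x u"
    and v: "\<forall>a\<in>set Eqs. aff_eval m a y v = 0" "\<forall>a\<in>set Ineqs. aff_eval m a y v \<le> 0"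
         "\<forall>(A, c)\<in>set Cones. sqrt (\<Sum>a\<leftarrow>A. (aff_eval m a y v)\<^sup>2) \<le> aff_eval m c y v"
    unfolding soc_set_def by blast
  define z where "z = s *\<^sub>R x + t *\<^sub>R y"
  define w where "w = (\<lambda>j. s * u j + t * v j)"
  have comb: "aff_eval m a z w = s * aff_eval m a x u + t * aff_eval m a y v" for a
    unfolding z_def w_def using st(3) by (rule aff_eval_convex_comb)
  have "\<forall>a\<in>set Eqs. aff_eval m a z w = 0"
    using u(1) v(1) by (simp add: comb)
  moreover have "\<forall>a\<in>set Ineqs. aff_eval m a z w \<le> 0"
    using u(2) v(2) st by (simp add: comb add_nonpos_nonpos mult_nonneg_nonpos)
  moreover have "sqrt (\<Sum>a\<leftarrow>A. (aff_eval m a z w)\<^sup>2) \<le> aff_eval m c z w"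
    if "(A, c) \<in> set Cones" for A c
  proof -
    have "sqrt (\<Sum>a\<leftarrow>A. (aff_eval m a z w)\<^sup>2) \<le>
          s * sqrt (\<Sum>a\<leftarrow>A. (aff_eval m a x u)\<^sup>2) + t * sqrt (\<Sum>a\<leftarrow>A. (aff_eval m a y v)\<^sup>2)"
      unfolding comb by (rule sqrt_sum_list_power2_convex[OF st(1,2)])
    also have "\<dots> \<le> s * aff_eval m c x u + t * aff_eval m c y v"
      using u(3) v(3) that st by (force intro: add_mono mult_left_mono)
    finally show ?thesis by (simp add: comb)
  qed
  ultimately have "z \<in> soc_set m Eqs Ineqs Cones"
    unfolding soc_set_def by blast
  then show "s *\<^sub>R x + t *\<^sub>R y \<in> soc_set m Eqs Ineqs Cones"
    by (simp add: z_def)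
qed

definition homogenizes :: "('a::real_vector \<times> real) set \<Rightarrow> 'a set \<Rightarrow> bool" where
  "homogenizes K S \<longleftrightarrow>
     (0, 0) \<in> K \<and> (\<forall>s\<in>S. (s, 1) \<in> K) \<and> (\<forall>(v, L)\<in>K. 0 \<le> L) \<and>
     (\<forall>v. (v, 0) \<in> K \<longrightarrow> v = 0) \<and>
     (\<forall>(v, L)\<in>K. 0 < L \<longrightarrow> v /\<^sub>R L \<in> convex hull S)"

lemma convex_perspective_sum:
  fixes K1 K2 :: "('a::real_vector \<times> real) set"
  assumes "convex K1" "convex K2"
  shows "convex {v1 + v2 |v1 v2 L. (v1, L) \<in> K1 \<and> (v2, 1 - L) \<in> K2}"
proof (rule convexI)
  fix p q and s t :: real
  assume "p \<in> {v1 + v2 |v1 v2 L. (v1, L) \<in> K1 \<and> (v2, 1 - L) \<in> K2}"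
    and "q \<in> {v1 + v2 |v1 v2 L. (v1, L) \<in> K1 \<and> (v2, 1 - L) \<in> K2}"
    and st: "0 \<le> s" "0 \<le> t" "s + t = 1"
  then obtain v1 v2 L w1 w2 M where p: "p = v1 + v2" "(v1, L) \<in> K1" "(v2, 1 - L) \<in> K2"
    and q: "q = w1 + w2" "(w1, M) \<in> K1" "(w2, 1 - M) \<in> K2"
    by blast
  have "s *\<^sub>R (v1, L) + t *\<^sub>R (w1, M) \<in> K1"
    using assms(1) p(2) q(2) st by (rule convexD)
  moreover have "s *\<^sub>R (v2, 1 - L) + t *\<^sub>R (w2, 1 - M) \<in> K2"
    using assms(2) p(3) q(3) st by (rule convexD)
  moreover have "s * (1 - L) + t * (1 - M) = 1 - (s * L + t * M)"
    using st(3) by (simp add: algebra_simps)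
  ultimately have "(s *\<^sub>R v1 + t *\<^sub>R w1, s * L + t * M) \<in> K1"
    "(s *\<^sub>R v2 + t *\<^sub>R w2, 1 - (s * L + t * M)) \<in> K2"
    by simp_all
  moreover have "s *\<^sub>R p + t *\<^sub>R q = (s *\<^sub>R v1 + t *\<^sub>R w1) + (s *\<^sub>R v2 + t *\<^sub>R w2)"
    unfolding p(1) q(1) by (simp add: algebra_simps)
  ultimately show "s *\<^sub>R p + t *\<^sub>R q \<in> {v1 + v2 |v1 v2 L. (v1, L) \<in> K1 \<and> (v2, 1 - L) \<in> K2}"
    by blast
qed

lemma convex_hull_Un_eq_perspective_sum:
  fixes K1 K2 :: "('a::real_vector \<times> real) set"
  assumes "convex K1" "convex K2" "homogenizes K1 S1" "homogenizes K2 S2"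
  shows "convex hull (S1 \<union> S2) = {v1 + v2 |v1 v2 L. (v1, L) \<in> K1 \<and> (v2, 1 - L) \<in> K2}"
    (is "_ = ?R")
proof
  show "convex hull (S1 \<union> S2) \<subseteq> ?R"
  proof (rule hull_minimal)
    show "S1 \<union> S2 \<subseteq> ?R"
    proof
      fix p assume "p \<in> S1 \<union> S2"
      then have "(p, 1) \<in> K1 \<and> (0, 1 - 1) \<in> K2 \<or> (0, 0) \<in> K1 \<and> (p, 1 - 0) \<in> K2"
        using assms(3,4) unfolding homogenizes_def by auto
      then show "p \<in> ?R"
        by (metis (mono_tags, lifting) add.left_neutral add.right_neutral mem_Collect_eq)
    qed
  qed (rule convex_perspective_sum[OF assms(1,2)])
next
  show "?R \<subseteq> convex hull (S1 \<union> S2)"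
  proof
    fix p assume "p \<in> ?R"
    then obtain v1 v2 L where p: "p = v1 + v2" and K: "(v1, L) \<in> K1" "(v2, 1 - L) \<in> K2"
      by blast
    have L: "0 \<le> L" "0 \<le> 1 - L"
      using assms(3,4) K unfolding homogenizes_def by auto
    have hull1: "v1 /\<^sub>R L \<in> convex hull (S1 \<union> S2)" if "0 < L"
      using assms(3) K(1) that hull_mono[of S1 "S1 \<union> S2" convex] unfolding homogenizes_def by auto
    have hull2: "v2 /\<^sub>R (1 - L) \<in> convex hull (S1 \<union> S2)" if "0 < 1 - L"
      using assms(4) K(2) that hull_mono[of S2 "S1 \<union> S2" convex] unfolding homogenizes_def by auto
    consider "L = 0" | "L = 1" | "0 < L" "0 < 1 - L"
      using L by fastforce
    then show "p \<in> convex hull (S1 \<union> S2)"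
    proof cases
      case 1
      then have "v1 = 0" using assms(3) K(1) unfolding homogenizes_def by auto
      then show ?thesis using hull2 1 p by simp
    next
      case 2
      then have "v2 = 0" using assms(4) K(2) unfolding homogenizes_def by auto
      then show ?thesis using hull1 2 p by simp
    next
      case 3
      have "L *\<^sub>R (v1 /\<^sub>R L) + (1 - L) *\<^sub>R (v2 /\<^sub>R (1 - L)) \<in> convex hull (S1 \<union> S2)"
        using hull1 hull2 3 by (intro convexD convex_convex_hull) auto
      then show ?thesis using 3 p by simp
    qed
  qed
qed

lemma mem_soc_set_0_iff:
  "x \<in> soc_set 0 Eqs Ineqs Cones \<longleftrightarrow>
     (\<forall>a\<in>set Eqs. aff_eval 0 a x u = 0) \<and>
     (\<forall>a\<in>set Ineqs. aff_eval 0 a x u \<le> 0) \<and>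
     (\<forall>(A, c)\<in>set Cones. sqrt (\<Sum>a\<leftarrow>A. (aff_eval 0 a x u)\<^sup>2) \<le> aff_eval 0 c x u)"
  by (simp add: soc_set_def aff_eval_def split_beta)

text \<open>The auxiliary variables u_0, u_1, u_2 carry the height L and the first summand
  (u_1, u_2); the second summand is then x - (u_1, u_2) at height 1 - L.\<close>

definition aux_form :: "((real \<times> real) \<times> real) aff_form \<Rightarrow> (real \<times> real) aff_form" where
  "aux_form a = (case a of (((p, q), r), _, e) \<Rightarrow>
     (0, \<lambda>j. if j = 0 then r else if j = 1 then p else if j = 2 then q else 0, e))"

definition compl_form :: "((real \<times> real) \<times> real) aff_form \<Rightarrow> (real \<times> real) aff_form" where
  "compl_form a = (case a of (((p, q), r), _, e) \<Rightarrow>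
     ((p, q), \<lambda>j. if j = 0 then - r else if j = 1 then - p else if j = 2 then - q else 0, e + r))"

lemma aff_eval_aux_form:
  "aff_eval 3 (aux_form a) x u = aff_eval 0 a ((u 1, u 2), u 0) v"
  by (cases a) (auto simp: aff_eval_def aux_form_def lessThan_nat_numeral algebra_simps)

lemma aff_eval_compl_form:
  "aff_eval 3 (compl_form a) x u = aff_eval 0 a (x - (u 1, u 2), 1 - u 0) v"
  by (cases a; cases x) (auto simp: aff_eval_def compl_form_def lessThan_nat_numeral algebra_simps)

lemma soc_representable_perspective_sum:
  fixes E1 I1 E2 I2 :: "((real \<times> real) \<times> real) aff_form list"
    and C1 C2 :: "(((real \<times> real) \<times> real) aff_form list \<times> ((real \<times> real) \<times> real) aff_form) list"
  shows "soc_representable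
     {v1 + v2 |v1 v2 L. (v1, L) \<in> soc_set 0 E1 I1 C1 \<and> (v2, 1 - L) \<in> soc_set 0 E2 I2 C2}"
proof -
  define R where "R = soc_set 3 (map aux_form E1 @ map compl_form E2)
    (map aux_form I1 @ map compl_form I2)
    (map (\<lambda>(A, c). (map aux_form A, aux_form c)) C1 @ map (\<lambda>(A, c). (map compl_form A, compl_form c)) C2)"
  have R_iff: "x \<in> R \<longleftrightarrow> (\<exists>u::nat \<Rightarrow> real. ((u 1, u 2), u 0) \<in> soc_set 0 E1 I1 C1 \<and>
                               (x - (u 1, u 2), 1 - u 0) \<in> soc_set 0 E2 I2 C2)" for x
    unfolding R_def soc_set_def[of 3]
    by (simp add: mem_soc_set_0_iff[where u = "\<lambda>_. 0"] aff_eval_aux_form[where v = "\<lambda>_. 0"]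
        aff_eval_compl_form[where v = "\<lambda>_. 0"] ball_Un split_beta o_def) blast
  have "{v1 + v2 |v1 v2 L. (v1, L) \<in> soc_set 0 E1 I1 C1 \<and> (v2, 1 - L) \<in> soc_set 0 E2 I2 C2} = R"
  proof (intro set_eqI iffI)
    fix x assume "x \<in> {v1 + v2 |v1 v2 L. (v1, L) \<in> soc_set 0 E1 I1 C1 \<and> (v2, 1 - L) \<in> soc_set 0 E2 I2 C2}"
    then obtain v1 v2 L where "x = v1 + v2" "(v1, L) \<in> soc_set 0 E1 I1 C1" "(v2, 1 - L) \<in> soc_set 0 E2 I2 C2"
      by blast
    then show "x \<in> R"
      unfolding R_iff
      by (intro exI[of _ "\<lambda>j. if j = 0 then L else if j = 1 then fst v1 else snd v1"]) simp
  next
    fix x assume "x \<in> R"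
    then obtain u :: "nat \<Rightarrow> real" where "((u 1, u 2), u 0) \<in> soc_set 0 E1 I1 C1" "(x - (u 1, u 2), 1 - u 0) \<in> soc_set 0 E2 I2 C2"
      unfolding R_iff by blast
    moreover have "x = (u 1, u 2) + (x - (u 1, u 2))" by simp
    ultimately show "x \<in> {v1 + v2 |v1 v2 L. (v1, L) \<in> soc_set 0 E1 I1 C1 \<and> (v2, 1 - L) \<in> soc_set 0 E2 I2 C2}"
      by blast
  qed
  then show ?thesis
    unfolding soc_representable_iff_soc_set R_def by blast
qed

definition soc_homogenizable :: "(real \<times> real) set \<Rightarrow> bool" where
  "soc_homogenizable S \<longleftrightarrow> (\<exists>Eqs Ineqs Cones. homogenizes (soc_set 0 Eqs Ineqs Cones) S)"

lemma soc_representable_convex_hull_Un: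
  assumes "soc_homogenizable S1" "soc_homogenizable S2"
  shows "soc_representable (convex hull (S1 \<union> S2))"
proof -
  obtain E1 I1 C1 E2 I2 C2 where
    "homogenizes (soc_set 0 E1 I1 C1) S1" "homogenizes (soc_set 0 E2 I2 C2) S2"
    using assms unfolding soc_homogenizable_def by blast
  then have "convex hull (S1 \<union> S2) =
    {v1 + v2 |v1 v2 L. (v1, L) \<in> soc_set 0 E1 I1 C1 \<and> (v2, 1 - L) \<in> soc_set 0 E2 I2 C2}"
    by (rule convex_hull_Un_eq_perspective_sum[OF convex_soc_set convex_soc_set])
  then show ?thesis
    by (simp only: soc_representable_perspective_sum)
qed

definition lin_form :: "real \<Rightarrow> real \<Rightarrow> real \<Rightarrow> ((real \<times> real) \<times> real) aff_form" where
  "lin_form p q r = (((p, q), r), \<lambda>_. 0, 0)"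

lemma aff_eval_lin_form [simp]: "aff_eval 0 (lin_form p q r) ((X, Y), L) u = p * X + q * Y + r * L"
  by (simp add: aff_eval_def lin_form_def)

lemma soc_homogenizable_box_line:
  "soc_homogenizable {(x, y). p * x + q * y = 0 \<and> x \<in> {xl..xu} \<and> y \<in> {yl..yu}}"
    (is "soc_homogenizable ?S")
proof -
  define K where "K = soc_set 0 [lin_form p q 0]
    [lin_form 0 0 (-1), lin_form (-1) 0 xl, lin_form 1 0 (- xu), lin_form 0 (-1) yl, lin_form 0 1 (- yu)] []"
  have K_iff: "((X, Y), L) \<in> K \<longleftrightarrow>
      p * X + q * Y = 0 \<and> 0 \<le> L \<and> xl * L \<le> X \<and> X \<le> xu * L \<and> yl * L \<le> Y \<and> Y \<le> yu * L" for X Y L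
    by (auto simp: K_def soc_set_def)
  have "(X, Y) /\<^sub>R L \<in> convex hull ?S" if "((X, Y), L) \<in> K" "0 < L" for X Y L
  proof (rule hull_inc)
    have "p * (X / L) + q * (Y / L) = (p * X + q * Y) / L"
      by (simp add: add_divide_distrib)
    moreover have "(X, Y) /\<^sub>R L = (X / L, Y / L)"
      by (simp add: divide_inverse_commute)
    ultimately show "(X, Y) /\<^sub>R L \<in> ?S"
      using that by (simp add: K_iff pos_le_divide_eq pos_divide_le_eq mult.commute)
  qed
  then have "homogenizes K ?S"
    unfolding homogenizes_def by (auto simp: K_iff zero_prod_def)
  then show ?thesis
    unfolding soc_homogenizable_def K_def by blast
qed

lemma rotated_soc_iff:
  fixes P Q w :: real
  shows "sqrt ((P - Q)\<^sup>2 + (2 * w)\<^sup>2) \<le> P + Q \<longleftrightarrow> 0 \<le> P + Q \<and> w\<^sup>2 \<le> P * Q"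
proof -
  have sq: "(P - Q)\<^sup>2 + (2 * w)\<^sup>2 \<le> (P + Q)\<^sup>2 \<longleftrightarrow> w\<^sup>2 \<le> P * Q"
    by (simp add: power2_eq_square algebra_simps)
  have "0 \<le> sqrt ((P - Q)\<^sup>2 + (2 * w)\<^sup>2)"
    by simp
  then show ?thesis
    using sq sqrt_le_D[of "(P - Q)\<^sup>2 + (2 * w)\<^sup>2" "P + Q"]
      real_le_lsqrt[of "P + Q" "(P - Q)\<^sup>2 + (2 * w)\<^sup>2"]
    by linarith
qed

lemma Pair_mem_closed_segment:
  "y \<in> closed_segment y1 y2 \<Longrightarrow> (x, y) \<in> closed_segment (x, y1) (x, y2)"
  by (auto simp: closed_segment_def algebra_simps)

lemma mem_convex_hull_hyperbola_arc:
  fixes \<beta> a b x y :: real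
  assumes "0 < a" "x \<in> {a..b}" "\<beta> \<le> x * y" "\<beta> * x + a * b * y \<le> \<beta> * (a + b)"
  shows "(x, y) \<in> convex hull ((\<lambda>t. (t, \<beta> / t)) ` {a..b})"
proof -
  let ?C = "convex hull ((\<lambda>t. (t, \<beta> / t)) ` {a..b})"
  define chord where "chord = \<beta> * (a + b - x) / (a * b)"
  have ab: "0 < a" "a \<le> b" "0 < b" "0 < x"
    using assms(1,2) by auto
  have "x \<in> closed_segment a b"
    using assms(2) ab(2) by (simp add: closed_segment_eq_real_ivl)
  then obtain u where u: "0 \<le> u" "u \<le> 1" "x = (1 - u) * a + u * b"
    unfolding closed_segment_def by auto
  then have "(x, chord) = (1 - u) *\<^sub>R (a, \<beta> / a) + u *\<^sub>R (b, \<beta> / b)"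
    using ab unfolding chord_def u(3) by (simp add: field_simps)
  then have "(x, chord) \<in> closed_segment (a, \<beta> / a) (b, \<beta> / b)"
    using u(1,2) unfolding closed_segment_def by blast
  moreover have "(a, \<beta> / a) \<in> ?C" "(b, \<beta> / b) \<in> ?C"
    using ab by (auto intro!: hull_inc)
  ultimately have chord_mem: "(x, chord) \<in> ?C"
    using closed_segment_subset[OF _ _ convex_convex_hull] by blast
  have "\<beta> / x \<le> y" "y \<le> chord"
    using assms(3,4) ab by (simp_all add: chord_def pos_divide_le_eq pos_le_divide_eq algebra_simps)
  then have "(x, y) \<in> closed_segment (x, \<beta> / x) (x, chord)"
    by (intro Pair_mem_closed_segment) (simp add: closed_segment_eq_real_ivl)
  moreover have "(x, \<beta> / x) \<in> ?C"
    using assms(2) by (intro hull_inc) auto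
  ultimately show ?thesis
    using chord_mem closed_segment_subset[OF _ _ convex_convex_hull] by blast
qed

lemma soc_homogenizable_hyperbola_arc:
  assumes \<beta>: "0 < \<beta>" and ab: "0 < a" "0 < b" and sx: "sx \<in> {-1, 1}" and sy: "sy \<in> {-1, 1}"
  shows "soc_homogenizable ((\<lambda>t. (sx * t, sy * (\<beta> / t))) ` {a..b})"
    (is "soc_homogenizable ?S")
proof -
  define K where "K = soc_set 0 []
    [lin_form 0 0 (-1), lin_form (- sx) 0 a, lin_form sx 0 (- b),
     lin_form (\<beta> * sx) (a * b * sy) (- (\<beta> * (a + b)))]
    [([lin_form sx (- sy) 0, lin_form 0 0 (2 * sqrt \<beta>)], lin_form sx sy 0)]"
  have K_iff: "((X, Y), L) \<in> K \<longleftrightarrow> 0 \<le> L \<and> a * L \<le> sx * X \<and> sx * X \<le> b * L \<and>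
      \<beta> * (sx * X) + a * b * (sy * Y) \<le> \<beta> * (a + b) * L \<and>
      0 \<le> sx * X + sy * Y \<and> \<beta> * L\<^sup>2 \<le> (sx * X) * (sy * Y)" for X Y L
    using rotated_soc_iff[of "sx * X" "sy * Y" "sqrt \<beta> * L"] \<beta>
    by (simp add: K_def soc_set_def power_mult_distrib algebra_simps)
  have sq: "sx * sx = 1" "sy * sy = 1"
    using sx sy by auto
  have "((sx * t, sy * (\<beta> / t)), 1) \<in> K" if "t \<in> {a..b}" for t
  proof -
    have t: "a \<le> t" "t \<le> b" "0 < t"
      using that ab by auto
    have "t * t + a * b \<le> (a + b) * t"
      using mult_nonneg_nonpos[of "t - a" "t - b"] t by (simp add: algebra_simps)
    then have "\<beta> * (t * t + a * b) \<le> \<beta> * ((a + b) * t)"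
      using \<beta> by (intro mult_left_mono) auto
    then have "\<beta> * t + a * b * (\<beta> / t) \<le> \<beta> * (a + b)"
      using t(3) by (simp add: field_simps)
    then show ?thesis
      using t \<beta> by (simp add: K_iff mult.assoc[symmetric] sq)
  qed
  moreover have "(X, Y) = 0" if "((X, Y), 0) \<in> K" for X Y
  proof -
    have "sx * X = 0" "a * b * (sy * Y) \<le> 0" "0 \<le> sy * Y"
      using that by (auto simp: K_iff)
    moreover have "0 < a * b"
      using ab by simp
    ultimately have "sx * X = 0" "sy * Y = 0"
      using mult_le_cancel_left_pos[of "a * b" "sy * Y" 0] by auto
    then show ?thesis
      using sx sy by (auto simp: zero_prod_def)
  qed
  moreover have "(X, Y) /\<^sub>R L \<in> convex hull ?S" if "((X, Y), L) \<in> K" "0 < L" for X Y L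
  proof -
    define f where "f = (\<lambda>p::real \<times> real. (sx * fst p, sy * snd p))"
    have "linear f"
      unfolding f_def by (intro linearI) (auto simp: algebra_simps)
    have "(sx * X / L, sy * Y / L) \<in> convex hull ((\<lambda>t. (t, \<beta> / t)) ` {a..b})"
      using that ab
      by (intro mem_convex_hull_hyperbola_arc)
        (auto simp: K_iff pos_le_divide_eq pos_divide_le_eq power2_eq_square field_simps)
    then have "f (sx * X / L, sy * Y / L) \<in> convex hull (f ` (\<lambda>t. (t, \<beta> / t)) ` {a..b})"
      by (rule in_convex_hull_linear_image[OF \<open>linear f\<close>])
    moreover have "f (sx * X / L, sy * Y / L) = (X, Y) /\<^sub>R L"
      by (simp add: f_def mult.assoc[symmetric] sq divide_inverse_commute)
    moreover have "f ` (\<lambda>t. (t, \<beta> / t)) ` {a..b} = ?S"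
      by (simp add: f_def image_image)
    ultimately show ?thesis
      by simp
  qed
  ultimately have "homogenizes K ?S"
    unfolding homogenizes_def by (auto simp: K_iff zero_prod_def)
  then show ?thesis
    unfolding soc_homogenizable_def K_def by blast
qed

lemma hyperbola_branch_interval:
  fixes \<beta> pl pu ql qu :: real
  assumes \<beta>: "0 < \<beta>"
  obtains a b where "0 < a" "0 < b" "{t. 0 < t \<and> t \<in> {pl..pu} \<and> \<beta> / t \<in> {ql..qu}} = {a..b}"
proof (cases "0 < qu")
  case False
  have "qu < \<beta> / t" if "0 < t" for t
    using divide_pos_pos[OF \<beta> that] False by linarith
  then have "{t. 0 < t \<and> t \<in> {pl..pu} \<and> \<beta> / t \<in> {ql..qu}} = {2..1}"
    by fastforce
  then show ?thesis
    using that[of 2 1] by simp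
next
  case True
  define a where "a = max pl (\<beta> / qu)"
  define c where "c = (if 0 < ql then min pu (\<beta> / ql) else pu)"
  have "0 < a"
    using \<beta> True by (simp add: a_def less_max_iff_disj)
  have upper: "\<beta> / t \<le> qu \<longleftrightarrow> \<beta> / qu \<le> t" if "0 < t" for t
    using that True by (simp add: pos_divide_le_eq mult.commute)
  have lower: "ql \<le> \<beta> / t \<longleftrightarrow> (0 < ql \<longrightarrow> t \<le> \<beta> / ql)" if "0 < t" for t
  proof (cases "0 < ql")
    case True
    then show ?thesis
      using that by (simp add: pos_le_divide_eq mult.commute)
  next
    case False
    then show ?thesis
      using that \<beta> by (simp add: order.trans[of ql 0 "\<beta> / t"])
  qed
  have "{t. 0 < t \<and> t \<in> {pl..pu} \<and> \<beta> / t \<in> {ql..qu}} = {a..c}"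
    using \<open>0 < a\<close> by (auto simp: upper lower a_def c_def)
  also have "\<dots> = {a..max c (a / 2)}"
    using \<open>0 < a\<close> by (cases "c < a") auto
  finally show ?thesis
    using \<open>0 < a\<close> by (intro that[of a "max c (a / 2)"]) auto
qed

lemma sign_mult_mem_atLeastAtMost:
  fixes s :: real
  assumes "s \<in> {-1, 1}"
  obtains l u where "\<And>t. s * t \<in> {xl..xu} \<longleftrightarrow> t \<in> {l..u}"
proof (cases "s = 1")
  case True
  then show ?thesis
    using that[of xl xu] by simp
next
  case False
  then have "s = -1"
    using assms by simp
  then show ?thesis
    by (intro that[of "- xu" "- xl"]) auto
qed

lemma soc_homogenizable_hyperbola_branch:
  assumes \<beta>: "0 < \<beta>" and sx: "sx \<in> {-1, 1}" and sy: "sy \<in> {-1, 1}"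
  shows "soc_homogenizable
    {(x, y). x * y = sx * sy * \<beta> \<and> x \<in> {xl..xu} \<and> y \<in> {yl..yu} \<and> 0 < sx * x}"
proof -
  obtain pl pu where p: "\<And>t. sx * t \<in> {xl..xu} \<longleftrightarrow> t \<in> {pl..pu}"
    using sign_mult_mem_atLeastAtMost[OF sx] by blast
  obtain ql qu where q: "\<And>t. sy * t \<in> {yl..yu} \<longleftrightarrow> t \<in> {ql..qu}"
    using sign_mult_mem_atLeastAtMost[OF sy] by blast
  obtain a b where ab: "0 < a" "0 < b"
    and param: "{t. 0 < t \<and> t \<in> {pl..pu} \<and> \<beta> / t \<in> {ql..qu}} = {a..b}"
    using hyperbola_branch_interval[OF \<beta>] by blast
  have sq: "sx * sx = 1" "sy * sy = 1"
    using sx sy by auto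
  have "(x, y) \<in> (\<lambda>t. (sx * t, sy * (\<beta> / t))) ` {t. 0 < t \<and> t \<in> {pl..pu} \<and> \<beta> / t \<in> {ql..qu}}
      \<longleftrightarrow> x * y = sx * sy * \<beta> \<and> x \<in> {xl..xu} \<and> y \<in> {yl..yu} \<and> 0 < sx * x" for x y
  proof
    assume "(x, y) \<in> (\<lambda>t. (sx * t, sy * (\<beta> / t))) ` {t. 0 < t \<and> t \<in> {pl..pu} \<and> \<beta> / t \<in> {ql..qu}}"
    then obtain t where t: "0 < t" "t \<in> {pl..pu}" "\<beta> / t \<in> {ql..qu}"
      and xy: "x = sx * t" "y = sy * (\<beta> / t)"
      by blast
    have "x * y = (sx * sy) * (t * (\<beta> / t))"
      unfolding xy by (simp add: ac_simps)
    then show "x * y = sx * sy * \<beta> \<and> x \<in> {xl..xu} \<and> y \<in> {yl..yu} \<and> 0 < sx * x"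
      using t xy p[of t] q[of "\<beta> / t"] by (simp add: mult.assoc[symmetric] sq)
  next
    assume xy: "x * y = sx * sy * \<beta> \<and> x \<in> {xl..xu} \<and> y \<in> {yl..yu} \<and> 0 < sx * x"
    define t where "t = sx * x"
    have x_eq: "sx * t = x"
      by (simp add: t_def mult.assoc[symmetric] sq)
    have y_eq: "sy * (\<beta> / t) = y"
      using xy sx by (auto simp: t_def field_simps)
    have "0 < t" "t \<in> {pl..pu}" "\<beta> / t \<in> {ql..qu}"
      using xy p[of t] q[of "\<beta> / t"] unfolding x_eq y_eq by (simp_all add: t_def)
    then show "(x, y) \<in> (\<lambda>t. (sx * t, sy * (\<beta> / t))) ` {t. 0 < t \<and> t \<in> {pl..pu} \<and> \<beta> / t \<in> {ql..qu}}"
      using x_eq y_eq by force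
  qed
  then have "{(x, y). x * y = sx * sy * \<beta> \<and> x \<in> {xl..xu} \<and> y \<in> {yl..yu} \<and> 0 < sx * x} =
      (\<lambda>t. (sx * t, sy * (\<beta> / t))) ` {a..b}"
    by (auto simp: param[symmetric])
  then show ?thesis
    using soc_homogenizable_hyperbola_arc[OF \<beta> ab sx sy] by simp
qed

theorem proposition12:
  fixes xl xu yl yu \<alpha> :: real
  assumes "xl < xu" and "yl < yu"
  shows "soc_representable
           (convex hull {(x, y). x * y = \<alpha> \<and> x \<in> {xl..xu} \<and> y \<in> {yl..yu}})"
proof -
  obtain S1 S2 where "soc_homogenizable S1" "soc_homogenizable S2"
    and "{(x, y). x * y = \<alpha> \<and> x \<in> {xl..xu} \<and> y \<in> {yl..yu}} = S1 \<union> S2"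
  proof (cases "\<alpha> = 0")
    case True
    show ?thesis
      by (rule that[OF soc_homogenizable_box_line[of 1 0] soc_homogenizable_box_line[of 0 1]])
        (auto simp: True)
  next
    case False
    have pos: "0 < \<bar>\<alpha>\<bar>"
      using False by simp
    have signs: "(1::real) \<in> {-1, 1}" "- 1 \<in> {-1, 1::real}" "sgn \<alpha> \<in> {-1, 1}" "- sgn \<alpha> \<in> {-1, 1}"
      using False by (auto simp: sgn_if)
    have nonzero: "x \<noteq> 0" if "x * y = \<alpha>" for x y :: real
      using False that by auto
    show ?thesis
      by (rule that[OF soc_homogenizable_hyperbola_branch[OF pos signs(1,3)]
            soc_homogenizable_hyperbola_branch[OF pos signs(2,4)]])
        (use nonzero in \<open>auto simp: sgn_mult_abs neq_iff\<close>)
  qed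
  then show ?thesis
    using soc_representable_convex_hull_Un by simp
qed

end
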